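(* Let $\Sigma$ be a non-empty finite or countably infinite alphabet and let $\mu$ be a probability map induced by a Bernoulli distribution $p$ on $\Sigma$ that is not positive (i.e. $p(b)=0$ for some $b\in\Sigma$). Then there exist a finite word $w\in\Sigma^*$ and a $\mu$-distributed $\alpha\in\Sigma^\omega$ such that the Postnikova strategy $\mathcal S_w=\{vw: v\in\Sigma^*\}$ selects from $\alpha$ an infinite sequence that is not $\mu$-distributed.
   Context: A probability map over $\Sigma$ is $\mu:\Sigma^+\to[0,1]$ with $\sum_{w\in\Sigma^n}\mu(w)=1$ for each $n\ge1$. $\mu$ is induced by a Bernoulli distribution $p:\Sigma\to[0,1]$ with $\sum_a p(a)=1$ if $\mu(a_1\cdots a_n)=\prod_i p(a_i)$; $p$ is positive if $p(a)>0$ for every $a$. $\alpha\in\Sigma^\omega$ is $\mu$-distributed if for every $w\in\Sigma^+$ the number of occurrences of $w$ as a contiguous block in the length-$N$ prefix of $\alpha$, divided by $N$, tends to $\mu(w)$. For $S\subseteq\Sigma^*$, $S[\alpha]$ is the subsequence of those $\alpha_i$ with $\alpha_1\cdots\alpha_{i-1}\in S$. *)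

theory Defs
  imports "HOL-Analysis.Analysis" "HOL-Library.Countable"
begin

text \<open>Words over the alphabet 'a are lists; infinite sequences are functions nat => 'a
  (0-indexed: alpha 0 is the first letter).\<close>

definition bernoulli_dist :: "('a \<Rightarrow> real) \<Rightarrow> bool" where
  "bernoulli_dist p \<longleftrightarrow> (\<forall>a. p a \<ge> 0) \<and> (p has_sum 1) UNIV"

definition bernoulli_map :: "('a \<Rightarrow> real) \<Rightarrow> 'a list \<Rightarrow> real" where
  "bernoulli_map p w = prod_list (map p w)"

definition occ :: "'a list \<Rightarrow> (nat \<Rightarrow> 'a) \<Rightarrow> nat \<Rightarrow> nat" where
  "occ w alpha N = card {i. i + length w \<le> N \<and> map alpha [i..<i + length w] = w}"

definition mu_distributed :: "('a list \<Rightarrow> real) \<Rightarrow> (nat \<Rightarrow> 'a) \<Rightarrow> bool" where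
  "mu_distributed mu alpha \<longleftrightarrow>
     (\<forall>w. w \<noteq> [] \<longrightarrow> (\<lambda>N. real (occ w alpha N) / real N) \<longlonglongrightarrow> mu w)"

text \<open>Positions selected by S: alpha i (0-indexed) is selected iff the prefix
  alpha 0 ... alpha (i-1) belongs to S.\<close>
definition sel_positions :: "'a list set \<Rightarrow> (nat \<Rightarrow> 'a) \<Rightarrow> nat set" where
  "sel_positions S alpha = {i. map alpha [0..<i] \<in> S}"

text \<open>The selected subsequence S[alpha] (meaningful when infinitely many positions are selected).\<close>
definition select :: "'a list set \<Rightarrow> (nat \<Rightarrow> 'a) \<Rightarrow> (nat \<Rightarrow> 'a)" where
  "select S alpha = alpha \<circ> enumerate (sel_positions S alpha)"

definition postnikova :: "'a list \<Rightarrow> 'a list set" where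
  "postnikova w = {v @ w | v. True}"

end

theory Submission
  imports Defs "HOL-Probability.Probability" "HOL-Real_Asymp.Real_Asymp"
begin

text \<open>Let \<open>p b = 0\<close> and pick a letter \<open>c \<noteq> b\<close>. A \<open>\<mu>\<close>-distributed sequence \<open>x\<close> exists by
  a strong law of large numbers for the Bernoulli product measure: for fixed \<open>w\<close> and \<open>r\<close>,
  the occurrences of \<open>w\<close> at the block-aligned positions \<open>j |w| + r\<close> are independent
  events, so Hoeffding's inequality and Borel-Cantelli give their frequency almost surely,
  and every occurrence count is a sum of \<open>|w|\<close> such aligned counts.

  Now replace each \<open>b\<close> in \<open>x\<close> by \<open>c\<close> and write \<open>b\<close> at the positions \<open>n\<^sup>2\<close> and
  \<open>n\<^sup>2 + 1\<close> for \<open>n \<ge> 2\<close> (so \<open>n\<^sup>2 + 2\<close> is never marked). Only a set of density zero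
  is changed, so the result \<open>\<alpha>\<close> is still \<open>\<mu>\<close>-distributed. The Postnikova strategy for
  \<open>w = [b]\<close> selects the positions right after a \<open>b\<close>, namely \<open>n\<^sup>2 + 1\<close> and \<open>n\<^sup>2 + 2\<close>,
  so the selected sequence has \<open>b\<close> at every even index, whereas \<open>\<mu>(b) = 0\<close>.\<close>

definition occurs_at :: "'a list \<Rightarrow> (nat \<Rightarrow> 'a) \<Rightarrow> nat \<Rightarrow> bool" where
  "occurs_at w x s \<longleftrightarrow> map x [s..<s + length w] = w"

definition aligned_occ :: "'a list \<Rightarrow> nat \<Rightarrow> (nat \<Rightarrow> 'a) \<Rightarrow> nat \<Rightarrow> nat" where
  "aligned_occ w r x m = card {j. j < m \<and> occurs_at w x (j * length w + r)}"

lemma occurs_at_iff_nth: "occurs_at w x s \<longleftrightarrow> (\<forall>i\<in>{s..<s + length w}. x i = w ! (i - s))"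
  unfolding occurs_at_def list_eq_iff_nth_eq
  by (auto simp: Ball_def) (metis add_diff_inverse_nat add_less_cancel_left not_le)

lemma occ_eq_card_occurs_at: "occ w x N = card {i. i + length w \<le> N \<and> occurs_at w x i}"
  unfolding occ_def occurs_at_def ..

lemma tendsto_shifted_div_ratio:
  fixes k r :: nat
  assumes "k > 0"
  shows "(\<lambda>N. real ((N - r) div k) / real N) \<longlonglongrightarrow> 1 / real k"
proof -
  have "eventually (\<lambda>N. real_of_int \<lfloor>(real N - real r) / real k\<rfloor> / real N
                          = real ((N - r) div k) / real N) sequentially"
    using eventually_ge_at_top[of r]
    by eventually_elim (simp add: of_nat_diff[symmetric] floor_divide_of_nat_eq del: of_nat_diff)
  moreover have "(\<lambda>N. real_of_int \<lfloor>(real N - real r) / real k\<rfloor> / real N) \<longlonglongrightarrow> 1 / real k"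
    using assms by real_asymp (simp add: divide_inverse)
  ultimately show ?thesis by (rule Lim_transform_eventually[rotated])
qed

lemma filterlim_shifted_div_at_top:
  fixes k r :: nat
  assumes "k > 0"
  shows "filterlim (\<lambda>N. (N - r) div k) at_top sequentially"
  unfolding filterlim_at_top
proof
  fix Z :: nat
  show "eventually (\<lambda>N. Z \<le> (N - r) div k) sequentially"
    using eventually_ge_at_top[of "Z * k + r"]
    by eventually_elim (use assms in \<open>simp add: less_eq_div_iff_mult_less_eq\<close>)
qed

lemma tendsto_interleaved_frequency:
  fixes C :: "nat \<Rightarrow> nat \<Rightarrow> nat"
  assumes k: "k > 0"
    and C0: "\<And>r. C r 0 = 0"
    and lim: "\<And>r. r < k \<Longrightarrow> (\<lambda>m. real (C r m) / real m) \<longlonglongrightarrow> \<mu>"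
  shows "(\<lambda>N. real (\<Sum>r<k. C r ((N - r) div k)) / real N) \<longlonglongrightarrow> \<mu>"
proof -
  let ?m = "\<lambda>r N. (N - r) div k"
  have split: "real (\<Sum>r<k. C r (?m r N)) / real N
      = (\<Sum>r<k. (real (C r (?m r N)) / real (?m r N)) * (real (?m r N) / real N))" for N
    unfolding of_nat_sum sum_divide_distrib
    by (intro sum.cong refl) (cases "?m r N = 0"; simp add: C0)
  have "(\<lambda>N. \<Sum>r<k. (real (C r (?m r N)) / real (?m r N)) * (real (?m r N) / real N))
          \<longlonglongrightarrow> (\<Sum>r<k. \<mu> * (1 / real k))"
  proof (intro tendsto_sum tendsto_mult)
    fix r assume "r \<in> {..<k}"
    then show "(\<lambda>N. real (C r (?m r N)) / real (?m r N)) \<longlonglongrightarrow> \<mu>"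
      using filterlim_compose[OF lim filterlim_shifted_div_at_top[OF k]] by simp
    show "(\<lambda>N. real (?m r N) / real N) \<longlonglongrightarrow> 1 / real k"
      by (rule tendsto_shifted_div_ratio[OF k])
  qed
  moreover have "(\<Sum>r<k. \<mu> * (1 / real k)) = \<mu>" using k by simp
  ultimately show ?thesis by (simp only: split)
qed

lemma occ_eq_sum_aligned_occ:
  assumes "w \<noteq> []"
  shows "occ w x N = (\<Sum>r<length w. aligned_occ w r x ((N - r) div length w))"
proof -
  define k where "k = length w"
  have k: "k > 0" using assms by (simp add: k_def)
  let ?A = "{i. i + k \<le> N \<and> occurs_at w x i}"
  have "finite ?A" by (rule finite_subset[of _ "{..N}"]) auto
  then have "card ?A = (\<Sum>r<k. card {i\<in>?A. i mod k = r})"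
    using sum.group[of ?A "{..<k}" "\<lambda>i. i mod k" "\<lambda>_. 1::nat"] k by (simp add: image_subset_iff)
  also have "\<dots> = (\<Sum>r<k. aligned_occ w r x ((N - r) div k))"
  proof (intro sum.cong refl)
    fix r assume r: "r \<in> {..<k}"
    have block: "j * k + r + k \<le> N \<longleftrightarrow> j < (N - r) div k" for j
    proof -
      have "j < (N - r) div k \<longleftrightarrow> Suc j * k \<le> N - r"
        using k by (metis Suc_le_eq less_eq_div_iff_mult_less_eq)
      then show ?thesis using k by auto
    qed
    have "{i\<in>?A. i mod k = r}
        = (\<lambda>j. j * k + r) ` {j. j < (N - r) div k \<and> occurs_at w x (j * k + r)}"
    proof (intro equalityI subsetI)
      fix i assume i: "i \<in> {i\<in>?A. i mod k = r}"
      define j where "j = i div k"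
      have ij: "j * k + r = i" using i div_mult_mod_eq[of i k] by (simp add: j_def)
      show "i \<in> (\<lambda>j. j * k + r) ` {j. j < (N - r) div k \<and> occurs_at w x (j * k + r)}"
      proof (rule image_eqI)
        show "i = j * k + r" by (simp add: ij)
        show "j \<in> {j. j < (N - r) div k \<and> occurs_at w x (j * k + r)}"
          using i block[of j] by (simp add: ij)
      qed
    next
      fix i assume "i \<in> (\<lambda>j. j * k + r) ` {j. j < (N - r) div k \<and> occurs_at w x (j * k + r)}"
      then obtain j where "i = j * k + r" "j < (N - r) div k" "occurs_at w x (j * k + r)" by blast
      then show "i \<in> {i\<in>?A. i mod k = r}" using r block[of j] by simp
    qed
    moreover have "inj (\<lambda>j. j * k + r)" using k by (auto simp: inj_on_def)
    ultimately show "card {i\<in>?A. i mod k = r} = aligned_occ w r x ((N - r) div k)"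
      unfolding aligned_occ_def k_def[symmetric] by (simp add: card_image inj_on_subset[of _ UNIV])
  qed
  finally show ?thesis unfolding occ_eq_card_occurs_at k_def .
qed

lemma tendsto_if_eventually_dist_less_inverse_Suc:
  assumes "\<And>l::nat. eventually (\<lambda>n. dist (f n) c < 1 / real (Suc l)) F"
  shows "(f \<longlongrightarrow> c) F"
  unfolding tendsto_iff
proof (intro allI impI)
  fix e :: real assume "e > 0"
  then obtain l where "1 / real (Suc l) < e"
    using reals_Archimedean by (auto simp: inverse_eq_divide)
  with assms[of l] show "eventually (\<lambda>n. dist (f n) c < e) F"
    by (auto elim: eventually_mono)
qed

locale bernoulli_sequence =
  fixes p :: "'a::countable \<Rightarrow> real"
  assumes bernoulli: "bernoulli_dist p"
begin

definition letter :: "'a pmf" where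
  "letter = embed_pmf p"

definition M :: "(nat \<Rightarrow> 'a) measure" where
  "M = PiM UNIV (\<lambda>_. measure_pmf letter)"

lemma pmf_letter: "pmf letter a = p a"
proof -
  have nonneg: "\<And>a. p a \<ge> 0" and sum: "(p has_sum 1) UNIV"
    using bernoulli unfolding bernoulli_dist_def by auto
  have "(\<lambda>x. norm (p x)) summable_on UNIV"
    using has_sum_imp_summable[OF sum] nonneg by simp
  then have abs: "Infinite_Set_Sum.abs_summable_on p UNIV"
    using abs_summable_equivalent by blast
  have "(\<integral>\<^sup>+x. ennreal (p x) \<partial>count_space UNIV) = ennreal (infsetsum p UNIV)"
    using abs nonneg by (intro nn_integral_conv_infsetsum) auto
  also have "infsetsum p UNIV = 1"
    using infsetsum_infsum[OF abs] infsumI[OF sum] by simp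
  finally show ?thesis
    unfolding letter_def using nonneg by (intro pmf_embed_pmf) auto
qed

sublocale prob_space M
  unfolding M_def by (rule prob_space_PiM) (rule prob_space_measure_pmf)

interpretation letters: product_prob_space "\<lambda>_::nat. measure_pmf letter" UNIV
  by (rule product_prob_spaceI) (rule prob_space_measure_pmf)

lemma space_M [simp]: "space M = UNIV"
  unfolding M_def by (simp add: space_PiM)

lemma occurs_at_eq_prod_emb:
  "{x. occurs_at w x s} =
     prod_emb UNIV (\<lambda>_. measure_pmf letter) {s..<s + length w} (PiE {s..<s + length w} (\<lambda>i. {w ! (i - s)}))"
  unfolding prod_emb_def occurs_at_iff_nth by (auto simp: PiE_iff)

lemma events_occurs_at [measurable]: "{x. occurs_at w x s} \<in> events"
  unfolding occurs_at_eq_prod_emb M_def by (rule sets_PiM_I) auto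

lemma prob_occurs_at: "prob {x. occurs_at w x s} = bernoulli_map p w"
proof -
  have "prob {x. occurs_at w x s} = (\<Prod>i\<in>{s..<s + length w}. measure letter {w ! (i - s)})"
    unfolding occurs_at_eq_prod_emb M_def by (rule letters.measure_PiM_emb) auto
  also have "\<dots> = (\<Prod>t<length w. p (w ! t))"
    using prod.shift_bounds_nat_ivl[of "\<lambda>i. p (w ! (i - s))" 0 s "length w"]
    by (simp add: measure_pmf_single pmf_letter add.commute atLeast0LessThan)
  also have "\<dots> = bernoulli_map p w"
    unfolding bernoulli_map_def by (induct w rule: rev_induct) (simp_all add: nth_append)
  finally show ?thesis .
qed

lemma indep_vars_coordinates:
  assumes "finite J" "J \<noteq> {}"
  shows "indep_vars (\<lambda>_. measure_pmf letter) (\<lambda>i x. x i) J"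
proof -
  have "distr M (Pi\<^sub>M J (\<lambda>_. measure_pmf letter)) (\<lambda>x. restrict x J)
      = Pi\<^sub>M J (\<lambda>_. measure_pmf letter)"
    unfolding M_def by (rule letters.distr_PiM_restrict_finite) (use assms in auto)
  moreover have "Pi\<^sub>M J (\<lambda>i. distr M (measure_pmf letter) (\<lambda>x. x i))
      = Pi\<^sub>M J (\<lambda>_. measure_pmf letter)"
    unfolding M_def by (intro PiM_cong refl letters.PiM_component) simp
  ultimately show ?thesis
    using assms(2) by (subst indep_vars_iff_distr_eq_PiM') (auto simp: M_def)
qed

lemma aligned_occ_eq_sum_indicator:
  "real (aligned_occ w r x m) = (\<Sum>j<m. indicator {x. occurs_at w x (j * length w + r)} x)"
  unfolding aligned_occ_def by (simp add: indicator_def sum.If_cases Int_def conj_commute)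

lemma borel_measurable_aligned_occ [measurable]:
  "(\<lambda>x. real (aligned_occ w r x m)) \<in> borel_measurable M"
  unfolding aligned_occ_eq_sum_indicator
  by (intro borel_measurable_sum borel_measurable_indicator events_occurs_at)

lemma indep_vars_aligned_occurrences:
  assumes "w \<noteq> []" "m > 0"
  shows "indep_vars (\<lambda>_. borel) (\<lambda>j. indicator {x. occurs_at w x (j * length w + r)} :: _ \<Rightarrow> real) {..<m}"
proof -
  define k where "k = length w"
  define K where "K j = {j * k + r..<j * k + r + k}" for j
  have k: "k > 0" using assms(1) by (simp add: k_def)
  have coordinates: "indep_vars (\<lambda>_. measure_pmf letter) (\<lambda>i x. x i) {..<m * k + r}"
    using assms(2) k by (intro indep_vars_coordinates) (auto simp: lessThan_empty_iff)
  have "K j \<subseteq> {..<m * k + r}" if "j \<in> {..<m}" for j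
    using that mult_le_mono1[of "Suc j" m k] by (auto simp: K_def)
  moreover have "disjoint_family_on K {..<m}"
    unfolding disjoint_family_on_def K_def
  proof (intro ballI impI)
    fix a b :: nat assume "a \<noteq> b"
    then have "Suc a * k \<le> b * k \<or> Suc b * k \<le> a * k"
      by (meson linorder_neqE_nat Suc_leI mult_le_mono1)
    then show "{a * k + r..<a * k + r + k} \<inter> {b * k + r..<b * k + r + k} = {}" by auto
  qed
  ultimately have blocks:
    "indep_vars (\<lambda>j. PiM (K j) (\<lambda>_. measure_pmf letter)) (\<lambda>j x. restrict x (K j)) {..<m}"
    using indep_vars_restrict[OF coordinates] by blast
  have "indep_vars (\<lambda>_. borel)
      (\<lambda>j x. indicator (PiE (K j) (\<lambda>i. {w ! (i - (j * k + r))})) (restrict x (K j)) :: real) {..<m}"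
  proof (rule indep_vars_compose2[OF blocks])
    fix j
    have "PiE (K j) (\<lambda>i. {w ! (i - (j * k + r))}) \<in> sets (PiM (K j) (\<lambda>_. measure_pmf letter))"
      by (rule sets_PiM_I_finite) (auto simp: K_def)
    then show "(indicator (PiE (K j) (\<lambda>i. {w ! (i - (j * k + r))})) :: _ \<Rightarrow> real)
        \<in> borel_measurable (PiM (K j) (\<lambda>_. measure_pmf letter))"
      by (rule borel_measurable_indicator)
  qed
  moreover have "(\<lambda>x. indicator (PiE (K j) (\<lambda>i. {w ! (i - (j * k + r))})) (restrict x (K j)) :: real)
      = indicator {x. occurs_at w x (j * length w + r)}" for j
    by (intro ext) (simp add: K_def k_def indicator_def occurs_at_iff_nth restrict_PiE_iff Pi_iff)
  ultimately show ?thesis by simp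
qed

lemma prob_aligned_occ_deviation:
  assumes "w \<noteq> []" "m > 0" "\<epsilon> \<ge> 0"
  shows "prob {x. \<bar>real (aligned_occ w r x m) - real m * bernoulli_map p w\<bar> \<ge> real m * \<epsilon>}
           \<le> 2 * exp (-2 * \<epsilon>\<^sup>2) ^ m"
proof -
  let ?X = "\<lambda>j. indicator {x. occurs_at w x (j * length w + r)} :: _ \<Rightarrow> real"
  interpret Hoeffding_ineq M "{..<m}" ?X "\<lambda>_. 0" "\<lambda>_. 1" "real m * bernoulli_map p w"
  proof unfold_locales
    show "indep_vars (\<lambda>_. borel) ?X {..<m}"
      by (rule indep_vars_aligned_occurrences[OF assms(1,2)])
    show "real m * bernoulli_map p w \<equiv> \<Sum>j<m. expectation (?X j)"
      by (simp add: prob_occurs_at)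
  qed (auto simp: indicator_def)
  have "prob {x. \<bar>(\<Sum>j<m. ?X j x) - real m * bernoulli_map p w\<bar> \<ge> real m * \<epsilon>}
        \<le> 2 * exp (- 2 * (real m * \<epsilon>)\<^sup>2 / (\<Sum>j<m. (1 - 0)\<^sup>2))"
    using Hoeffding_ineq_abs_ge[of "real m * \<epsilon>"] assms(2,3) by simp
  also have "\<dots> = 2 * exp (-2 * \<epsilon>\<^sup>2) ^ m"
    using assms(2) by (simp add: power2_eq_square flip: exp_of_nat_mult)
  finally show ?thesis by (simp only: aligned_occ_eq_sum_indicator)
qed

lemma AE_eventually_aligned_frequency_close:
  assumes "w \<noteq> []" "\<epsilon> > 0"
  shows "AE x in M. eventually (\<lambda>m. dist (real (aligned_occ w r x m) / real m) (bernoulli_map p w) < \<epsilon>)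
                       sequentially"
proof -
  define A where
    "A m = {x \<in> space M. \<bar>real (aligned_occ w r x m) - real m * bernoulli_map p w\<bar> \<ge> real m * \<epsilon>}" for m
  define q where "q = exp (-2 * \<epsilon>\<^sup>2)"
  have q: "0 \<le> q" "q < 1" unfolding q_def using assms(2) by auto
  have bound: "prob (A m) \<le> 2 * q ^ m" for m
  proof (cases "m = 0")
    case True
    show ?thesis using prob_le_1[of "A m"] True by (simp only: power_0)
  next
    case False
    then show ?thesis
      using prob_aligned_occ_deviation[OF assms(1), of m \<epsilon> r] assms(2) by (simp add: A_def q_def)
  qed
  have "summable (\<lambda>m. 2 * q ^ m)"
    using q by (intro summable_mult summable_geometric) auto
  then have "summable (\<lambda>m. prob (A m))"
    by (rule summable_comparison_test') (use bound in auto)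
  moreover have "A m \<in> events" for m
    unfolding A_def by measurable
  ultimately have "AE x in M. eventually (\<lambda>m. x \<notin> A m) sequentially"
    using borel_cantelli_AE1[of A M] by (simp add: emeasure_eq_measure)
  then show ?thesis
  proof (rule eventually_mono)
    fix x assume "eventually (\<lambda>m. x \<notin> A m) sequentially"
    with eventually_gt_at_top[of 0]
    show "eventually (\<lambda>m. dist (real (aligned_occ w r x m) / real m) (bernoulli_map p w) < \<epsilon>)
            sequentially"
    proof eventually_elim
      case (elim m)
      then have "\<bar>real (aligned_occ w r x m) - real m * bernoulli_map p w\<bar> / real m < \<epsilon>"
        by (simp add: A_def field_simps)
      with elim(1) show ?case
        by (simp add: dist_real_def field_simps abs_div[symmetric] del: abs_div)
    qed
  qed
qed

lemma AE_aligned_frequency: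
  assumes "w \<noteq> []"
  shows "AE x in M. (\<lambda>m. real (aligned_occ w r x m) / real m) \<longlonglongrightarrow> bernoulli_map p w"
proof -
  have "AE x in M. \<forall>l::nat. eventually (\<lambda>m. dist (real (aligned_occ w r x m) / real m) (bernoulli_map p w)
                                               < 1 / real (Suc l)) sequentially"
    unfolding AE_all_countable using assms by (intro allI AE_eventually_aligned_frequency_close) auto
  then show ?thesis
    by (rule eventually_mono) (rule tendsto_if_eventually_dist_less_inverse_Suc, blast)
qed

lemma AE_mu_distributed: "AE x in M. mu_distributed (bernoulli_map p) x"
proof -
  have "AE x in M. \<forall>w. \<forall>r. w \<noteq> [] \<longrightarrow>
      (\<lambda>m. real (aligned_occ w r x m) / real m) \<longlonglongrightarrow> bernoulli_map p w"
    unfolding AE_all_countable by (intro allI AE_impI AE_aligned_frequency)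
  then show ?thesis
  proof (rule eventually_mono)
    fix x assume aligned: "\<forall>w. \<forall>r. w \<noteq> [] \<longrightarrow>
      (\<lambda>m. real (aligned_occ w r x m) / real m) \<longlonglongrightarrow> bernoulli_map p w"
    show "mu_distributed (bernoulli_map p) x"
      unfolding mu_distributed_def
    proof (intro allI impI)
      fix w :: "'a list" assume w: "w \<noteq> []"
      have "(\<lambda>N. real (\<Sum>r<length w. aligned_occ w r x ((N - r) div length w)) / real N)
              \<longlonglongrightarrow> bernoulli_map p w"
      proof (rule tendsto_interleaved_frequency)
        show "length w > 0" using w by simp
        show "aligned_occ w r x 0 = 0" for r by (simp add: aligned_occ_def)
        show "(\<lambda>m. real (aligned_occ w r x m) / real m) \<longlonglongrightarrow> bernoulli_map p w" for r
          using aligned w by blast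
      qed
      then show "(\<lambda>N. real (occ w x N) / real N) \<longlonglongrightarrow> bernoulli_map p w"
        by (simp only: occ_eq_sum_aligned_occ[OF w])
    qed
  qed
qed

end

lemma exists_mu_distributed:
  fixes p :: "'a::countable \<Rightarrow> real"
  assumes "bernoulli_dist p"
  shows "\<exists>x. mu_distributed (bernoulli_map p) x"
proof -
  interpret bernoulli_sequence p by (rule bernoulli_sequence.intro[OF assms])
  show ?thesis
    using eventually_happens'[OF ae_filter_bot AE_mu_distributed] by blast
qed

definition density_zero :: "nat set \<Rightarrow> bool" where
  "density_zero S \<longleftrightarrow> (\<lambda>N. real (card (S \<inter> {..<N})) / real N) \<longlonglongrightarrow> 0"

lemma density_zero_subset:
  assumes "density_zero T" "S \<subseteq> T"
  shows "density_zero S"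
  unfolding density_zero_def
proof (rule Lim_null_comparison)
  show "eventually (\<lambda>N. norm (real (card (S \<inter> {..<N})) / real N)
          \<le> real (card (T \<inter> {..<N})) / real N) sequentially"
  proof (intro always_eventually allI)
    fix N
    have "card (S \<inter> {..<N}) \<le> card (T \<inter> {..<N})"
      by (rule card_mono) (use assms(2) in auto)
    then show "norm (real (card (S \<inter> {..<N})) / real N) \<le> real (card (T \<inter> {..<N})) / real N"
      by (simp add: divide_right_mono)
  qed
qed (use assms(1) in \<open>simp add: density_zero_def\<close>)

lemma density_zero_Un:
  assumes "density_zero S" "density_zero T"
  shows "density_zero (S \<union> T)"
  unfolding density_zero_def
proof (rule Lim_null_comparison)
  show "eventually (\<lambda>N. norm (real (card ((S \<union> T) \<inter> {..<N})) / real N)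
          \<le> real (card (S \<inter> {..<N})) / real N + real (card (T \<inter> {..<N})) / real N) sequentially"
  proof (intro always_eventually allI)
    fix N
    have "card ((S \<union> T) \<inter> {..<N}) \<le> card (S \<inter> {..<N}) + card (T \<inter> {..<N})"
      unfolding Int_Un_distrib2 by (rule card_Un_le)
    then have "real (card ((S \<union> T) \<inter> {..<N})) / real N
        \<le> (real (card (S \<inter> {..<N})) + real (card (T \<inter> {..<N}))) / real N"
      by (intro divide_right_mono) auto
    then show "norm (real (card ((S \<union> T) \<inter> {..<N})) / real N)
          \<le> real (card (S \<inter> {..<N})) / real N + real (card (T \<inter> {..<N})) / real N"
      by (simp add: add_divide_distrib)
  qed
  show "(\<lambda>N. real (card (S \<inter> {..<N})) / real N + real (card (T \<inter> {..<N})) / real N) \<longlonglongrightarrow> 0"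
    using tendsto_add[OF assms[unfolded density_zero_def]] by simp
qed

lemma occ_singleton: "occ [b] x N = card ({i. x i = b} \<inter> {..<N})"
  unfolding occ_def by (rule arg_cong[where f = card]) auto

lemma density_zero_letter:
  assumes "mu_distributed mu x" "mu [b] = 0"
  shows "density_zero {i. x i = b}"
proof -
  have "(\<lambda>N. real (occ [b] x N) / real N) \<longlonglongrightarrow> mu [b]"
    using assms(1) unfolding mu_distributed_def by blast
  then show ?thesis
    using assms(2) unfolding density_zero_def occ_singleton by simp
qed

lemma occ_le_occ_add_disagreements:
  "occ w x N \<le> occ w y N + length w * card ({i. x i \<noteq> y i} \<inter> {..<N})"
proof -
  let ?k = "length w"
  define A where "A z = {i. i + ?k \<le> N \<and> occurs_at w z i}" for z
  define D where "D = {i. x i \<noteq> y i} \<inter> {..<N}"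
  have fin: "finite (A z)" for z
    unfolding A_def by (rule finite_subset[of _ "{..N}"]) auto
  have "A x - A y \<subseteq> (\<lambda>(d, t). d - t) ` (D \<times> {..<?k})"
  proof
    fix i assume i: "i \<in> A x - A y"
    have "\<exists>t<?k. x (i + t) \<noteq> y (i + t)"
    proof (rule ccontr)
      assume "\<not> ?thesis"
      then have "map x [i..<i + ?k] = map y [i..<i + ?k]"
        by (intro map_cong refl) (metis atLeastLessThan_iff le_add_diff_inverse add_less_cancel_left set_upt)
      with i show False unfolding A_def occurs_at_def by auto
    qed
    then obtain t where t: "t < ?k" "x (i + t) \<noteq> y (i + t)" by blast
    with i have "i + t \<in> D" unfolding A_def D_def by auto
    with t show "i \<in> (\<lambda>(d, t). d - t) ` (D \<times> {..<?k})"
      by (intro image_eqI[of _ _ "(i + t, t)"]) auto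
  qed
  then have "card (A x - A y) \<le> card (D \<times> {..<?k})"
    by (rule surj_card_le[rotated]) (simp add: D_def)
  have "card (A x) \<le> card (A y \<union> (A x - A y))"
    by (rule card_mono) (auto simp: fin)
  also have "\<dots> \<le> card (A y) + card (A x - A y)"
    by (rule card_Un_le)
  also have "card (A x - A y) \<le> card D * ?k"
    using \<open>card (A x - A y) \<le> card (D \<times> {..<?k})\<close> by (simp add: card_cartesian_product)
  finally show ?thesis
    unfolding occ_eq_card_occurs_at A_def D_def by (simp add: mult.commute)
qed

lemma mu_distributed_if_density_zero_disagreement:
  assumes y: "mu_distributed mu y" and disagree: "density_zero {i. x i \<noteq> y i}"
  shows "mu_distributed mu x"
  unfolding mu_distributed_def
proof (intro allI impI)
  fix w :: "'a list" assume w: "w \<noteq> []"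
  define d where "d N = real (card ({i. x i \<noteq> y i} \<inter> {..<N}))" for N
  have sym: "{i. y i \<noteq> x i} = {i. x i \<noteq> y i}" by auto
  have "real (occ w x N) \<le> real (occ w y N) + real (length w) * d N"
       "real (occ w y N) \<le> real (occ w x N) + real (length w) * d N" for N
    using occ_le_occ_add_disagreements[of w x N y] occ_le_occ_add_disagreements[of w y N x]
    unfolding d_def sym by (metis of_nat_add of_nat_le_iff of_nat_mult)+
  then have close: "norm (real (occ w x N) / real N - real (occ w y N) / real N)
                      \<le> real (length w) * (d N / real N)" for N
    by (simp add: abs_le_iff divide_right_mono field_simps flip: diff_divide_distrib)
  have "(\<lambda>N. real (occ w x N) / real N - real (occ w y N) / real N) \<longlonglongrightarrow> 0"
  proof (rule Lim_null_comparison[OF always_eventually[OF allI[OF close]]])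
    show "(\<lambda>N. real (length w) * (d N / real N)) \<longlonglongrightarrow> 0"
      using tendsto_mult_right_zero[OF disagree[unfolded density_zero_def]] unfolding d_def .
  qed
  moreover have "(\<lambda>N. real (occ w y N) / real N) \<longlonglongrightarrow> mu w"
    using y w unfolding mu_distributed_def by blast
  ultimately have "(\<lambda>N. real (occ w y N) / real N + (real (occ w x N) / real N - real (occ w y N) / real N))
      \<longlonglongrightarrow> mu w + 0"
    by (intro tendsto_add)
  then show "(\<lambda>N. real (occ w x N) / real N) \<longlonglongrightarrow> mu w" by simp
qed

definition square_pairs :: "nat set" where
  "square_pairs = range (\<lambda>n. (n + 2)\<^sup>2) \<union> range (\<lambda>n. (n + 2)\<^sup>2 + 1)"

definition after_square_pair :: "nat \<Rightarrow> nat" where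
  "after_square_pair j = (j div 2 + 2)\<^sup>2 + 1 + j mod 2"

lemma card_square_pairs_below: "real (card (square_pairs \<inter> {..<N})) \<le> 2 * sqrt (real N) + 2"
proof -
  define T where "T = nat \<lfloor>sqrt (real N)\<rfloor>"
  have "n \<le> T" if "(n + 2)\<^sup>2 < N" for n
  proof -
    have "n\<^sup>2 \<le> (n + 2)\<^sup>2" by (intro power_mono) auto
    with that have "n\<^sup>2 \<le> N" by linarith
    then have "real n ^ 2 \<le> real N" by (metis of_nat_le_iff of_nat_power)
    then show ?thesis
      unfolding T_def by (intro le_nat_floor) (simp add: real_le_rsqrt)
  qed
  then have "square_pairs \<inter> {..<N} \<subseteq> (\<lambda>n. (n + 2)\<^sup>2) ` {..T} \<union> (\<lambda>n. (n + 2)\<^sup>2 + 1) ` {..T}"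
    unfolding square_pairs_def by auto
  then have "card (square_pairs \<inter> {..<N})
      \<le> card ((\<lambda>n. (n + 2)\<^sup>2) ` {..T}) + card ((\<lambda>n. (n + 2)\<^sup>2 + 1) ` {..T})"
    by (meson card_Un_le card_mono finite_Un finite_atMost finite_imageI order_trans)
  also have "\<dots> \<le> 2 * (T + 1)"
    using card_image_le[of "{..T}" "\<lambda>n. (n + 2)\<^sup>2"] card_image_le[of "{..T}" "\<lambda>n. (n + 2)\<^sup>2 + 1"]
    by simp
  finally have "real (card (square_pairs \<inter> {..<N})) \<le> real (2 * (T + 1))"
    by (rule of_nat_mono)
  moreover have "real T \<le> sqrt (real N)"
    unfolding T_def using of_int_floor_le[of "sqrt (real N)"] by simp
  ultimately show ?thesis by simp
qed

lemma density_zero_square_pairs: "density_zero square_pairs"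
  unfolding density_zero_def
proof (rule Lim_null_comparison)
  show "eventually (\<lambda>N. norm (real (card (square_pairs \<inter> {..<N})) / real N)
          \<le> (2 * sqrt (real N) + 2) / real N) sequentially"
    using card_square_pairs_below by (intro always_eventually allI) (simp add: divide_right_mono)
  show "(\<lambda>N. (2 * sqrt (real N) + 2) / real N) \<longlonglongrightarrow> 0" by real_asymp
qed

lemma strict_mono_after_square_pair: "strict_mono after_square_pair"
proof (rule strict_monoI_Suc)
  fix j
  show "after_square_pair j < after_square_pair (Suc j)"
  proof (cases "even j")
    case True
    then have "Suc j div 2 = j div 2" "Suc j mod 2 = 1" "j mod 2 = 0" by presburger+
    then show ?thesis unfolding after_square_pair_def by simp
  next
    case False
    then have "Suc j div 2 = j div 2 + 1" "Suc j mod 2 = 0" "j mod 2 = 1"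
      by (simp_all add: odd_Suc_div_two odd_iff_mod_2_eq_one)
    then show ?thesis unfolding after_square_pair_def by (simp add: power2_eq_square)
  qed
qed

lemma range_after_square_pair: "range after_square_pair = Suc ` square_pairs"
proof (intro equalityI subsetI)
  fix i assume "i \<in> range after_square_pair"
  then obtain j where "i = after_square_pair j" by blast
  then show "i \<in> Suc ` square_pairs"
    unfolding after_square_pair_def square_pairs_def by (cases "even j") (auto simp: odd_iff_mod_2_eq_one)
next
  fix i assume "i \<in> Suc ` square_pairs"
  then obtain n where "i = Suc ((n + 2)\<^sup>2) \<or> i = Suc ((n + 2)\<^sup>2 + 1)"
    unfolding square_pairs_def by auto
  then have "i = after_square_pair (2 * n) \<or> i = after_square_pair (2 * n + 1)"
    unfolding after_square_pair_def by auto
  then show "i \<in> range after_square_pair" by blast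
qed

lemma enumerate_range_strict_mono:
  fixes f :: "nat \<Rightarrow> nat"
  assumes "strict_mono f"
  shows "enumerate (range f) n = f n"
proof (induct n)
  case 0
  show ?case unfolding enumerate_0
    by (rule Least_equality) (auto simp: assms strict_mono_less_eq)
next
  case (Suc n)
  have "infinite (range f)"
    by (rule range_inj_infinite[OF strict_mono_imp_inj_on[OF assms]])
  show ?case unfolding enumerate_Suc''[OF \<open>infinite (range f)\<close>] Suc
    by (rule Least_equality) (auto simp: assms strict_mono_less strict_mono_less_eq Suc_le_eq)
qed

lemma not_mu_distributed_if_letter_at_even:
  assumes even: "\<And>m. y (2 * m) = b" and null: "mu [b] = 0"
  shows "\<not> mu_distributed mu y"
proof
  assume "mu_distributed mu y"
  then have "(\<lambda>N. real (occ [b] y N) / real N) \<longlonglongrightarrow> mu [b]"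
    unfolding mu_distributed_def by blast
  then have "(\<lambda>N. real (occ [b] y N) / real N) \<longlonglongrightarrow> 0"
    using null by simp
  moreover have "strict_mono (\<lambda>n::nat. 2 * Suc n)"
    by (simp add: strict_mono_def)
  ultimately have lim: "(\<lambda>n. real (occ [b] y (2 * Suc n)) / real (2 * Suc n)) \<longlonglongrightarrow> 0"
    by (rule LIMSEQ_subseq_LIMSEQ[unfolded o_def])
  have half: "1 / 2 \<le> real (occ [b] y (2 * Suc n)) / real (2 * Suc n)" for n
  proof -
    have "(\<lambda>m. 2 * m) ` {..n} \<subseteq> {i. y i = b} \<inter> {..<2 * Suc n}"
      using even by auto
    then have "card ((\<lambda>m. 2 * m) ` {..n}) \<le> occ [b] y (2 * Suc n)"
      unfolding occ_singleton by (intro card_mono) auto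
    then have "Suc n \<le> occ [b] y (2 * Suc n)"
      by (simp add: card_image inj_on_def)
    then show ?thesis by (simp add: field_simps)
  qed
  have "1 / 2 \<le> (0::real)"
    using half by (intro tendsto_lowerbound[OF lim] always_eventually) auto
  then show False by simp
qed

lemma postnikova_singleton: "xs \<in> postnikova [b] \<longleftrightarrow> xs \<noteq> [] \<and> last xs = b"
proof
  assume "xs \<in> postnikova [b]"
  then obtain v where "xs = v @ [b]" unfolding postnikova_def by blast
  then show "xs \<noteq> [] \<and> last xs = b" by simp
next
  assume "xs \<noteq> [] \<and> last xs = b"
  then have "xs = butlast xs @ [b]" by (metis append_butlast_last_id)
  then show "xs \<in> postnikova [b]" unfolding postnikova_def by blast
qed

definition plant_square_pairs :: "'a \<Rightarrow> 'a \<Rightarrow> (nat \<Rightarrow> 'a) \<Rightarrow> nat \<Rightarrow> 'a" where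
  "plant_square_pairs b c x i = (if i \<in> square_pairs then b else if x i = b then c else x i)"

lemma plant_square_pairs_eq_iff:
  "c \<noteq> b \<Longrightarrow> plant_square_pairs b c x i = b \<longleftrightarrow> i \<in> square_pairs"
  unfolding plant_square_pairs_def by auto

lemma mu_distributed_plant_square_pairs:
  assumes "mu_distributed mu x" "mu [b] = 0"
  shows "mu_distributed mu (plant_square_pairs b c x)"
proof (rule mu_distributed_if_density_zero_disagreement[OF assms(1)])
  have "{i. plant_square_pairs b c x i \<noteq> x i} \<subseteq> square_pairs \<union> {i. x i = b}"
    unfolding plant_square_pairs_def by auto
  then show "density_zero {i. plant_square_pairs b c x i \<noteq> x i}"
    using density_zero_Un[OF density_zero_square_pairs density_zero_letter[OF assms]]
    by (rule density_zero_subset[rotated])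
qed

lemma select_postnikova_plant_square_pairs:
  assumes "c \<noteq> b"
  shows "sel_positions (postnikova [b]) (plant_square_pairs b c x) = range after_square_pair"
    and "select (postnikova [b]) (plant_square_pairs b c x) = plant_square_pairs b c x \<circ> after_square_pair"
proof -
  have "i \<in> sel_positions (postnikova [b]) (plant_square_pairs b c x) \<longleftrightarrow> i \<in> Suc ` square_pairs" for i
  proof (cases i)
    case (Suc j)
    then have "i \<in> Suc ` square_pairs \<longleftrightarrow> j \<in> square_pairs" by auto
    with Suc show ?thesis
      by (simp add: sel_positions_def postnikova_singleton last_map plant_square_pairs_eq_iff[OF assms])
  qed (simp add: sel_positions_def postnikova_singleton)
  then show sel: "sel_positions (postnikova [b]) (plant_square_pairs b c x) = range after_square_pair"
    unfolding range_after_square_pair by blast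
  show "select (postnikova [b]) (plant_square_pairs b c x) = plant_square_pairs b c x \<circ> after_square_pair"
    unfolding select_def sel enumerate_range_strict_mono[OF strict_mono_after_square_pair] ..
qed

lemma plant_square_pairs_after_square_pair_even:
  "c \<noteq> b \<Longrightarrow> plant_square_pairs b c x (after_square_pair (2 * m)) = b"
  unfolding plant_square_pairs_eq_iff after_square_pair_def square_pairs_def by simp

lemma bernoulli_dist_ex_pos:
  fixes p :: "'a \<Rightarrow> real"
  assumes "bernoulli_dist p"
  shows "\<exists>c. p c > 0"
proof (rule ccontr)
  assume "\<not> (\<exists>c. p c > 0)"
  with assms have "p = (\<lambda>_. 0)"
    unfolding bernoulli_dist_def by (auto intro: antisym simp: not_less)
  with assms have "((\<lambda>_::'a. 0::real) has_sum 1) UNIV"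
    unfolding bernoulli_dist_def by simp
  moreover have "((\<lambda>_::'a. 0::real) has_sum 0) UNIV"
    by (rule has_sum_0) simp
  ultimately show False
    using has_sum_unique by fastforce
qed

theorem lemma4p2:
  fixes p :: "'a::countable \<Rightarrow> real"
  assumes "bernoulli_dist p"
    and "\<exists>b. p b = 0"
  shows "\<exists>(w::'a list) (alpha::nat \<Rightarrow> 'a).
           mu_distributed (bernoulli_map p) alpha
         \<and> infinite (sel_positions (postnikova w) alpha)
         \<and> \<not> mu_distributed (bernoulli_map p) (select (postnikova w) alpha)"
proof -
  obtain b where "p b = 0" using assms(2) by blast
  then have null: "bernoulli_map p [b] = 0" by (simp add: bernoulli_map_def)
  obtain c where "p c > 0" using bernoulli_dist_ex_pos[OF assms(1)] by blast
  with \<open>p b = 0\<close> have "c \<noteq> b" by auto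
  obtain x where "mu_distributed (bernoulli_map p) x"
    using exists_mu_distributed[OF assms(1)] by blast
  let ?\<alpha> = "plant_square_pairs b c x"
  have "mu_distributed (bernoulli_map p) ?\<alpha>"
    by (rule mu_distributed_plant_square_pairs[OF \<open>mu_distributed _ x\<close> null])
  moreover have "infinite (sel_positions (postnikova [b]) ?\<alpha>)"
    unfolding select_postnikova_plant_square_pairs(1)[OF \<open>c \<noteq> b\<close>]
    by (rule range_inj_infinite[OF strict_mono_imp_inj_on[OF strict_mono_after_square_pair]])
  moreover have "\<not> mu_distributed (bernoulli_map p) (select (postnikova [b]) ?\<alpha>)"
    unfolding select_postnikova_plant_square_pairs(2)[OF \<open>c \<noteq> b\<close>]
    using plant_square_pairs_after_square_pair_even[OF \<open>c \<noteq> b\<close>] null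
    by (intro not_mu_distributed_if_letter_at_even) auto
  ultimately show ?thesis by blast
qed

end
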